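(* Let $K\colon\mathbb{E}(D)\to\mathbb{E}(D)$ be an affine function and let $u\colon D\to[0,\infty)$ be a prefixed point of $K$, i.e. $K(u)\le u$. If $\mathsf{D}K$ has a $u$-ranking supermartingale, then the restriction $K_{\le u}\colon\mathbb{E}_{\le u}(D)\to\mathbb{E}_{\le u}(D)$ of $K$ has a unique fixed point.
   Context: $\mathbb{E}(D)$ is the set of functions $D\to[0,\infty]$ with pointwise order and operations ($\infty+x=\infty$, $0\cdot\infty=0$, $r\cdot\infty=\infty$ for $r>0$); $\mathbb{E}_{\le u}(D)=\{\eta\mid \eta\le u\}$; $\mathbb{O}$ is the constant zero function; for $x\ge y$ in $[0,\infty]$, $x-y$ is the least $z$ with $x=y+z$. $K$ is affine if $K(\alpha\eta_1+(1-\alpha)\eta_2)=\alpha K(\eta_1)+(1-\alpha)K(\eta_2)$ for all $\eta_1,\eta_2$ and $\alpha\in[0,1]$. $(\mathsf{D}K)(\eta)=K(\eta)-K(\mathbb{O})$. A $u$-ranking supermartingale with respect to $\mathsf{D}K$ is a function $r\colon D\to[0,\infty)$ with $(\mathsf{D}K)(r)+u\le r$. *)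

theory Defs
  imports "HOL-Analysis.Analysis"
begin

text \<open>Expectations E(D) are functions D \<Rightarrow> ennreal ([0,\<infinity>]), ordered and operated pointwise.\<close>

text \<open>Note Isabelle's ennreal minus has top - top = top, whereas the
  paper's convention gives 0, so we define it explicitly.\<close>
definition ediff :: "ennreal \<Rightarrow> ennreal \<Rightarrow> ennreal" where
  "ediff x y = Inf {z. x = y + z}"

definition affine_trans :: "(('d \<Rightarrow> ennreal) \<Rightarrow> ('d \<Rightarrow> ennreal)) \<Rightarrow> bool" where
  "affine_trans K \<longleftrightarrow> (\<forall>\<eta>1 \<eta>2 (\<alpha>::real). 0 \<le> \<alpha> \<and> \<alpha> \<le> 1 \<longrightarrow>
      K (\<lambda>d. ennreal \<alpha> * \<eta>1 d + ennreal (1 - \<alpha>) * \<eta>2 d)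
        = (\<lambda>d. ennreal \<alpha> * K \<eta>1 d + ennreal (1 - \<alpha>) * K \<eta>2 d))"

definition DK :: "(('d \<Rightarrow> ennreal) \<Rightarrow> ('d \<Rightarrow> ennreal)) \<Rightarrow> ('d \<Rightarrow> ennreal) \<Rightarrow> ('d \<Rightarrow> ennreal)" where
  "DK K \<eta> = (\<lambda>d. ediff (K \<eta> d) (K (\<lambda>_. 0) d))"

definition ranking_supermartingale ::
  "(('d \<Rightarrow> ennreal) \<Rightarrow> ('d \<Rightarrow> ennreal)) \<Rightarrow> ('d \<Rightarrow> real) \<Rightarrow> ('d \<Rightarrow> real) \<Rightarrow> bool" where
  "ranking_supermartingale L u r \<longleftrightarrow> (\<forall>d. 0 \<le> r d) \<and>
     (\<forall>d. L (\<lambda>x. ennreal (r x)) d + ennreal (u d) \<le> ennreal (r d))"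

end

(* Affinity makes K monotone: K(O) is its least value and K(x + y) + K(O) = K(x) + K(y).
   Hence the least fixed point of K lies below the prefixed point u.  For uniqueness, let
   a, b <= u be fixed points and delta = |a - b|.  From a <= b + delta and b <= a + delta,
   affinity gives delta <= DK(delta), and then n delta <= DK(n delta) for all n.  With the
   ranking supermartingale r, n delta <= r implies
   (n + 1) delta <= n delta + u <= DK(n delta) + u <= DK(r) + u <= r,
   so all multiples of delta are bounded by the finite r, forcing delta = 0.
   Because K(O) <= K(u) <= u is finite, inequalities about DK are stated without
   subtraction, as x + K(O) <= K(y). *)

theory Submission
  imports Defs
begin

lemma ennreal_add_right_cancel_le:
  fixes a b c :: ennreal
  assumes "c \<noteq> top"
  shows "a + c \<le> b + c \<longleftrightarrow> a \<le> b"
  using assms by (metis add.commute ennreal_add_left_cancel_le infinity_ennreal_def)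

lemma ennreal_le_mult_one_interval:
  fixes x y :: ennreal
  assumes scaled: "\<And>z::real. 0 < z \<Longrightarrow> z < 1 \<Longrightarrow> ennreal z * x \<le> y"
  shows "x \<le> y"
proof (cases x)
  case (real r)
  show ?thesis
  proof (cases y)
    case (real p)
    have "r \<le> p"
    proof (rule field_le_mult_one_interval)
      fix z :: real assume "0 < z" "z < 1"
      then show "z * r \<le> p"
        using scaled[of z] \<open>x = ennreal r\<close> \<open>0 \<le> r\<close> real by (simp add: ennreal_mult''[symmetric])
    qed
    then show ?thesis using \<open>x = ennreal r\<close> real by simp
  qed simp
next
  case top
  then show ?thesis using scaled[of "1/2"] by (simp add: ennreal_mult_top top_unique)
qed

lemma ennreal_eq_0_if_multiples_bounded:
  fixes x b :: ennreal
  assumes "\<And>n::nat. of_nat n * x \<le> b" and "b \<noteq> top"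
  shows "x = 0"
proof (cases x)
  case (real t)
  obtain p where p: "b = ennreal p" "0 \<le> p" using assms(2) by (cases b) auto
  have "of_nat n * t \<le> p" for n :: nat
    using assms(1)[of n] real p by (simp add: ennreal_of_nat_eq_real_of_nat ennreal_mult''[symmetric])
  then have "t \<le> 0"
    by (metis ex_less_of_nat_mult not_le)
  then show ?thesis using real by simp
next
  case top
  then show ?thesis using assms(1)[of 1] assms(2) by (simp add: top_unique)
qed

lemma ediff_eq_minus:
  fixes x y :: ennreal
  assumes "y \<noteq> top" and "y \<le> x"
  shows "ediff x y = x - y"
proof -
  have "{z. x = y + z} = {x - y}"
    using assms by (auto simp: add_diff_inverse_ennreal)
  then show ?thesis unfolding ediff_def by simp
qed

lemma ennreal_le_add_abs_diff:
  fixes x y :: ennreal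
  assumes "x \<noteq> top" and "y \<noteq> top"
  shows "x \<le> y + ennreal \<bar>enn2real x - enn2real y\<bar>"
  using assms by (cases x; cases y) (auto simp flip: ennreal_plus)

lemma ennreal_abs_diff_add_le:
  fixes x y k m :: ennreal
  assumes "x \<noteq> top" "y \<noteq> top" "k \<noteq> top" "m \<noteq> top"
    and "x + k \<le> y + m" and "y + k \<le> x + m"
  shows "ennreal \<bar>enn2real x - enn2real y\<bar> + k \<le> m"
  using assms by (cases x; cases y; cases k; cases m) (auto simp flip: ennreal_plus)

lemma ennreal_abs_diff_le:
  fixes x y z :: ennreal
  assumes "x \<noteq> top" "y \<noteq> top" "x \<le> z" "y \<le> z"
  shows "ennreal \<bar>enn2real x - enn2real y\<bar> \<le> z"
proof -
  have "ennreal \<bar>enn2real x - enn2real y\<bar> \<le> x \<or> ennreal \<bar>enn2real x - enn2real y\<bar> \<le> y"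
    using assms(1,2) by (cases x; cases y) (auto simp: abs_if)
  then show ?thesis
    using assms(3,4) by (auto intro: order_trans)
qed

lemma affine_transD:
  assumes "affine_trans K" and "0 \<le> \<alpha>" and "\<alpha> \<le> 1"
  shows "K (\<lambda>d. ennreal \<alpha> * \<eta>1 d + ennreal (1 - \<alpha>) * \<eta>2 d)
       = (\<lambda>d. ennreal \<alpha> * K \<eta>1 d + ennreal (1 - \<alpha>) * K \<eta>2 d)"
  using assms unfolding affine_trans_def by blast

lemma affine_trans_add:
  assumes "affine_trans K"
  shows "K (\<lambda>d. x d + y d) d + K (\<lambda>_. 0) d = K x d + K y d"
proof -
  let ?h = "ennreal (1/2)"
  have "?h * (K (\<lambda>d. x d + y d) d + K (\<lambda>_. 0) d)
      = K (\<lambda>d. ?h * (x d + y d) + ennreal (1 - 1/2) * 0) d"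
    using affine_transD[OF assms, of "1/2" "\<lambda>d. x d + y d" "\<lambda>_. 0"]
    by (simp add: distrib_left)
  also have "\<dots> = K (\<lambda>d. ?h * x d + ennreal (1 - 1/2) * y d) d"
    by (simp add: distrib_left)
  also have "\<dots> = ?h * (K x d + K y d)"
    using affine_transD[OF assms, of "1/2" x y] by (simp add: distrib_left)
  finally show ?thesis
    by (simp add: ennreal_mult_cancel_left)
qed

lemma affine_trans_zero_le:
  assumes "affine_trans K"
  shows "K (\<lambda>_. 0) d \<le> K y d"
proof (rule ennreal_le_mult_one_interval)
  fix z :: real assume z: "0 < z" "z < 1"
  have "y = (\<lambda>d. ennreal (1 - z) * (ennreal (1 / (1 - z)) * y d) + ennreal (1 - (1 - z)) * 0)"
    using z by (simp add: mult.assoc[symmetric] flip: ennreal_mult'')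
  then have "K y d = ennreal (1 - z) * K (\<lambda>d. ennreal (1 / (1 - z)) * y d) d + ennreal z * K (\<lambda>_. 0) d"
    using affine_transD[OF assms, of "1 - z" "\<lambda>d. ennreal (1 / (1 - z)) * y d" "\<lambda>_. 0"] z
    by simp
  then show "ennreal z * K (\<lambda>_. 0) d \<le> K y d"
    by (simp add: add_increasing)
qed

lemma affine_trans_mono:
  assumes "affine_trans K"
  shows "mono K"
proof (intro monoI le_funI)
  fix x z :: "'a \<Rightarrow> ennreal" and d assume "x \<le> z"
  define w where "w = (\<lambda>d. z d - x d)"
  have "(\<lambda>d. x d + w d) = z"
    using \<open>x \<le> z\<close> by (auto simp: le_fun_def add_diff_inverse_ennreal w_def)
  then have sum: "K z d + K (\<lambda>_. 0) d = K x d + K w d"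
    using affine_trans_add[OF assms, of x w d] by simp
  show "K x d \<le> K z d"
  proof (cases "K (\<lambda>_. 0) d = top")
    case True
    then show ?thesis using affine_trans_zero_le[OF assms, of d z] by (simp add: top_unique)
  next
    case False
    have "K x d + K (\<lambda>_. 0) d \<le> K z d + K (\<lambda>_. 0) d"
      unfolding sum using affine_trans_zero_le[OF assms, of d w] by (rule add_left_mono)
    then show ?thesis using False by (simp add: ennreal_add_right_cancel_le)
  qed
qed

lemma mono_image_below_prefixpoint_finite:
  fixes K :: "('d \<Rightarrow> ennreal) \<Rightarrow> ('d \<Rightarrow> ennreal)"
  assumes "mono K" and "K U \<le> U" and "U d \<noteq> top" and "x \<le> U"
  shows "K x d \<noteq> top"
  using le_funD[OF order.trans[OF monoD[OF assms(1,4)] assms(2)], of d] assms(3)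
  by (metis top_unique)

lemma affine_trans_fixpoints_abs_diff_le:
  fixes a b :: "'d \<Rightarrow> ennreal"
  defines "\<delta> \<equiv> \<lambda>d. ennreal \<bar>enn2real (a d) - enn2real (b d)\<bar>"
  assumes aff: "affine_trans K"
    and fixed: "K a = a" "K b = b"
    and fin: "\<And>d. a d \<noteq> top" "\<And>d. b d \<noteq> top" "K (\<lambda>_. 0) d \<noteq> top" "K \<delta> d \<noteq> top"
  shows "\<delta> d + K (\<lambda>_. 0) d \<le> K \<delta> d"
proof -
  have shifted: "x d + K (\<lambda>_. 0) d \<le> y d + K \<delta> d"
    if "K x = x" "K y = y" "x \<le> (\<lambda>d. y d + \<delta> d)" for x y
  proof -
    have "x d + K (\<lambda>_. 0) d \<le> K (\<lambda>d. y d + \<delta> d) d + K (\<lambda>_. 0) d"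
      using monoD[OF affine_trans_mono[OF aff] \<open>x \<le> _\<close>] \<open>K x = x\<close> by (metis add_right_mono le_funD)
    also have "\<dots> = y d + K \<delta> d"
      using affine_trans_add[OF aff, of y \<delta> d] \<open>K y = y\<close> by simp
    finally show ?thesis .
  qed
  have "a \<le> (\<lambda>d. b d + \<delta> d)" "b \<le> (\<lambda>d. a d + \<delta> d)"
    unfolding \<delta>_def le_fun_def
    using ennreal_le_add_abs_diff[OF fin(1,2)] ennreal_le_add_abs_diff[OF fin(2,1)]
    by (simp_all add: abs_minus_commute)
  then have "a d + K (\<lambda>_. 0) d \<le> b d + K \<delta> d" "b d + K (\<lambda>_. 0) d \<le> a d + K \<delta> d"
    using shifted fixed by blast+
  then show ?thesis
    using ennreal_abs_diff_add_le[OF fin(1,2)[of d] fin(3,4)] unfolding \<delta>_def by simp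
qed

lemma affine_trans_of_nat_mult_ge:
  assumes aff: "affine_trans K"
    and fin: "\<And>d. K (\<lambda>_. 0) d \<noteq> top"
    and ge: "\<And>d. \<delta> d + K (\<lambda>_. 0) d \<le> K \<delta> d"
  shows "of_nat n * \<delta> d + K (\<lambda>_. 0) d \<le> K (\<lambda>d. of_nat n * \<delta> d) d"
proof (induction n arbitrary: d)
  case 0
  then show ?case by simp
next
  case (Suc n)
  have "(of_nat (Suc n) * \<delta> d + K (\<lambda>_. 0) d) + K (\<lambda>_. 0) d
      = (of_nat n * \<delta> d + K (\<lambda>_. 0) d) + (\<delta> d + K (\<lambda>_. 0) d)"
    by (simp add: algebra_simps)
  also have "\<dots> \<le> K (\<lambda>d. of_nat n * \<delta> d) d + K \<delta> d"
    using Suc.IH ge by (rule add_mono)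
  also have "\<dots> = K (\<lambda>d. of_nat (Suc n) * \<delta> d) d + K (\<lambda>_. 0) d"
    using affine_trans_add[OF aff, of "\<lambda>d. of_nat n * \<delta> d" \<delta> d] by (simp add: algebra_simps)
  finally show ?case
    using fin by (simp add: ennreal_add_right_cancel_le)
qed

lemma ranking_supermartingale_DK_add_le:
  assumes aff: "affine_trans K"
    and rsm: "ranking_supermartingale (DK K) u r"
    and fin: "K (\<lambda>_. 0) d \<noteq> top"
  shows "K (\<lambda>d. ennreal (r d)) d + ennreal (u d) \<le> ennreal (r d) + K (\<lambda>_. 0) d"
proof -
  have zero_le: "K (\<lambda>_. 0) d \<le> K (\<lambda>d. ennreal (r d)) d"
    by (rule affine_trans_zero_le[OF aff])
  have "K (\<lambda>d. ennreal (r d)) d - K (\<lambda>_. 0) d + ennreal (u d) \<le> ennreal (r d)"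
    using rsm ediff_eq_minus[OF fin zero_le] unfolding ranking_supermartingale_def DK_def by metis
  then have "K (\<lambda>_. 0) d + (K (\<lambda>d. ennreal (r d)) d - K (\<lambda>_. 0) d) + ennreal (u d)
      \<le> K (\<lambda>_. 0) d + ennreal (r d)"
    by (metis add.assoc add_left_mono)
  then show ?thesis
    using zero_le by (simp add: add_diff_inverse_ennreal add.commute)
qed

lemma ranking_bound_add_le:
  assumes aff: "affine_trans K"
    and fin: "K (\<lambda>_. 0) d \<noteq> top"
    and rank: "K R d + U d \<le> R d + K (\<lambda>_. 0) d"
    and "\<eta> \<le> R" and sub: "\<eta> d + K (\<lambda>_. 0) d \<le> K \<eta> d"
  shows "\<eta> d + U d \<le> R d"
proof -
  have "(\<eta> d + U d) + K (\<lambda>_. 0) d = (\<eta> d + K (\<lambda>_. 0) d) + U d"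
    by (simp add: algebra_simps)
  also have "\<dots> \<le> K \<eta> d + U d"
    using sub by (rule add_right_mono)
  also have "\<dots> \<le> K R d + U d"
    using monoD[OF affine_trans_mono[OF aff] \<open>\<eta> \<le> R\<close>] by (simp add: le_fun_def add_right_mono)
  also have "\<dots> \<le> R d + K (\<lambda>_. 0) d"
    by (rule rank)
  finally show ?thesis
    using fin by (simp add: ennreal_add_right_cancel_le)
qed

lemma ranking_bound_of_nat_mult:
  assumes aff: "affine_trans K"
    and fin: "\<And>d. K (\<lambda>_. 0) d \<noteq> top"
    and rank: "\<And>d. K R d + U d \<le> R d + K (\<lambda>_. 0) d"
    and "\<delta> \<le> U" and sub: "\<And>d. \<delta> d + K (\<lambda>_. 0) d \<le> K \<delta> d"
  shows "(\<lambda>d. of_nat n * \<delta> d) \<le> R"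
proof (induction n)
  case 0
  then show ?case by (simp add: le_fun_def)
next
  case (Suc n)
  show ?case
  proof (rule le_funI)
    fix d
    have "of_nat n * \<delta> d + U d \<le> R d"
      using ranking_bound_add_le[OF aff fin rank Suc.IH affine_trans_of_nat_mult_ge[OF aff fin sub]] .
    then show "of_nat (Suc n) * \<delta> d \<le> R d"
      using le_funD[OF \<open>\<delta> \<le> U\<close>, of d] by (simp add: algebra_simps) (meson add_right_mono order_trans)
  qed
qed

lemma affine_trans_fixpoint_below_unique:
  fixes K :: "('d \<Rightarrow> ennreal) \<Rightarrow> ('d \<Rightarrow> ennreal)"
  assumes aff: "affine_trans K"
    and U: "\<And>d. U d \<noteq> top" "K U \<le> U"
    and R: "\<And>d. R d \<noteq> top"
    and rank: "\<And>d. K R d + U d \<le> R d + K (\<lambda>_. 0) d"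
    and a: "a \<le> U" "K a = a" and b: "b \<le> U" "K b = b"
  shows "a = b"
proof -
  have mono: "mono K"
    using aff by (rule affine_trans_mono)
  have a_fin: "a d \<noteq> top" and b_fin: "b d \<noteq> top" for d
    using a b U(1) by (metis le_funD top_unique)+
  have zero_fin: "K (\<lambda>_. 0) d \<noteq> top" for d
    by (rule mono_image_below_prefixpoint_finite[OF mono U(2) U(1)]) (simp add: le_fun_def)
  define \<delta> where "\<delta> = (\<lambda>d. ennreal \<bar>enn2real (a d) - enn2real (b d)\<bar>)"
  have \<delta>_le_U: "\<delta> \<le> U"
    using a(1) b(1) a_fin b_fin unfolding \<delta>_def le_fun_def by (blast intro: ennreal_abs_diff_le)
  have sub: "\<delta> d + K (\<lambda>_. 0) d \<le> K \<delta> d" for d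
    unfolding \<delta>_def
    by (rule affine_trans_fixpoints_abs_diff_le[OF aff a(2) b(2) a_fin b_fin zero_fin])
       (use mono_image_below_prefixpoint_finite[OF mono U(2) U(1) \<delta>_le_U] in \<open>simp add: \<delta>_def\<close>)
  have \<delta>_zero: "\<delta> d = 0" for d
    using ranking_bound_of_nat_mult[OF aff zero_fin rank \<delta>_le_U sub] R
    by (intro ennreal_eq_0_if_multiples_bounded[of _ "R d"]) (auto simp: le_fun_def)
  have "a d = b d" for d
    using \<delta>_zero[of d] a_fin[of d] b_fin[of d] unfolding \<delta>_def by (cases "a d"; cases "b d") auto
  then show "a = b" ..
qed

theorem corollary3p7:
  fixes K :: "('d \<Rightarrow> ennreal) \<Rightarrow> ('d \<Rightarrow> ennreal)" and u :: "'d \<Rightarrow> real"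
  assumes "affine_trans K"
    and "\<forall>d. 0 \<le> u d"
    and "K (\<lambda>d. ennreal (u d)) \<le> (\<lambda>d. ennreal (u d))"
    and "\<exists>r. ranking_supermartingale (DK K) u r"
  shows "\<exists>!\<eta>. \<eta> \<le> (\<lambda>d. ennreal (u d)) \<and> K \<eta> = \<eta>"
proof -
  define U where "U = (\<lambda>d. ennreal (u d))"
  obtain r where r: "ranking_supermartingale (DK K) u r"
    using assms(4) by blast
  have mono: "mono K"
    using assms(1) by (rule affine_trans_mono)
  have KU: "K U \<le> U"
    using assms(3) unfolding U_def .
  have zero_fin: "K (\<lambda>_. 0) d \<noteq> top" for d
    by (rule mono_image_below_prefixpoint_finite[OF mono KU]) (simp_all add: U_def le_fun_def)
  have lfp_below: "lfp K \<le> U" and lfp_fixed: "K (lfp K) = lfp K"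
    using lfp_lowerbound[of K, OF KU] lfp_fixpoint[OF mono] by auto
  have unique: "\<eta> = lfp K" if "\<eta> \<le> U" "K \<eta> = \<eta>" for \<eta>
    using affine_trans_fixpoint_below_unique[OF assms(1) _ KU, of "\<lambda>d. ennreal (r d)"]
      ranking_supermartingale_DK_add_le[OF assms(1) r zero_fin] that lfp_below lfp_fixed
    unfolding U_def by auto
  show ?thesis
    using lfp_below lfp_fixed unique unfolding U_def by blast
qed

end
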